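(* Let $(X^1,\dots,X^M,Y)$ ($M\ge 2$) be discrete random variables, $X^m$ taking values in $\mathcal{X}^m$ and $Y$ in a finite set $\mathcal{C}$ with prior $\mathbf{p}^*=(\Pr(Y=c))_{c\in\mathcal{C}}$, $\mathbf{p}^*_c>0$. Assume: (A1) (conditional independence) for all $x^{[M]}$ and $c$, $\Pr(X^{[M]}=x^{[M]}\mid Y=c)=\prod_m\Pr(X^m=x^m\mid Y=c)$; (A2) (well-defined prior) whenever $(a^1,\dots,a^M,r^a)$ and $(b^1,\dots,b^M,r^b)$, with $a^m,b^m:\mathcal{X}^m\to\Delta_{\mathcal{C}}$ and $r^a,r^b\in\Delta_{\mathcal{C}}$, both satisfy $\sum_{c\in\mathcal{C}}\frac{\prod_m a^m(x^m)_c}{(r^a_c)^{M-1}}=R(x^1,\dots,x^M)$ (resp. with $b,r^b$) for all $x^{[M]}$, there is a permutation $\pi:\mathcal{C}\to\mathcal{C}$ with $a^m(x^m)_c=b^m(x^m)_{\pi(c)}$ for all $m,x^m,c$ and $r^a_c=r^b_{\pi(c)}$ for all $c$. For classifiers $h^m:\mathcal{X}^m\to\Delta_{\mathcal{C}}$ and $p\in\Delta_{\mathcal{C}}$ with positive entries, and $N\ge M$, define $$TCg(\{x_i^{[M]}\}_{i=1}^N;h^{[M]},p):=1+\frac1N\sum_{i=1}^N\log\sum_{c\in\mathcal{C}}\frac{\prod_m h^m(x^m_i)_c}{(p_c)^{M-1}}-\frac{1}{N!/(N-M)!}\sum_{\substack{i_1,\dots,i_M\\ \text{pairwise distinct}}}\sum_{c\in\mathcal{C}}\frac{\prod_m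 h^m(x^m_{i_m})_c}{(p_c)^{M-1}},$$ and $eTCg(h^{[M]},p):=\mathbb{E}\big[TCg(\{x_i^{[M]}\}_{i=1}^N;h^{[M]},p)\big]$ where $x_1^{[M]},\dots,x_N^{[M]}$ are i.i.d. from the marginal law of $(X^1,\dots,X^M)$. Then: (i) the maximum value of $eTCg$ over all such $(h^{[M]},p)$ equals $\mathrm{TC}(X^1,\dots,X^M)$; (ii) $(h^{[M]}_*,\mathbf{p}^* )$ is a maximizer, i.e. $eTCg(h^{[M]}_*,\mathbf{p}^* )\ge eTCg(h^{[M]},p)$ for all $(h^{[M]},p)$, and the corresponding aggregator $\zeta(\cdot;h^{[M]}_*,\mathbf{p}^* )$ equals $\zeta_*$, i.e. $\zeta(x^{[M]};h^{[M]}_*,\mathbf{p}^* )_c=\Pr(Y=c\mid X^{[M]}=x^{[M]})$; (iii) for any maximizer $(\tilde h^{[M]},\tilde{\mathbf{p}})$ of $eTCg$ there is a permutation $\tilde\pi:\mathcal{C}\to\mathcal{C}$ such that $\tilde h^m(x^m)_c=\Pr(Y=\tilde\pi(c)\mid X^m=x^m)$ for all $m,x^m,c$ and $\tilde{\mathbf{p}}_c=\Pr(Y=\tilde\pi(c))$ for all $c$.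
   Context: $\Delta_{\mathcal{C}}$ denotes the probability simplex over $\mathcal{C}$. $R(x^1,\dots,x^M):=\Pr(X^{[M]}=x^{[M]})/\prod_m\Pr(X^m=x^m)$ is the joint-marginal ratio, and $\mathrm{TC}(X^1,\dots,X^M):=\mathbb{E}_{\text{joint}}[\log R]$ is the total correlation. The Bayesian posterior classifiers are $h^m_*(x^m)_c:=\Pr(Y=c\mid X^m=x^m)$, and the Bayesian posterior aggregator is $\zeta_*(x^{[M]})_c:=\Pr(Y=c\mid X^{[M]}=x^{[M]})$. For classifiers $h^{[M]}$ and $p\in\Delta_{\mathcal{C}}$, the aggregator is $\zeta(x^{[M]};h^{[M]},p):=\mathrm{Normalize}\Big(\big(\prod_m h^m(x^m)_c/(p_c)^{M-1}\big)_{c\in\mathcal{C}}\Big)$, where $\mathrm{Normalize}(v):=v/\sum_c v_c$. *)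

theory Defs
  imports "HOL-Probability.Probability"
begin

(* Joint law: P :: ((nat => 'x) * 'c) pmf; the features are X^m(w) = fst w m, m < M,
   the label is Y(w) = snd w. The label set C is the finite type 'c. *)

definition prob_simplex :: "('c::finite \<Rightarrow> real) set" where
  "prob_simplex = {v. (\<forall>c. 0 \<le> v c) \<and> (\<Sum>c\<in>UNIV. v c) = 1}"

definition Xvec :: "nat \<Rightarrow> ((nat \<Rightarrow> 'x) \<times> 'c) \<Rightarrow> (nat \<Rightarrow> 'x)" where
  "Xvec M w = restrict (fst w) {..<M}"

definition jointX :: "nat \<Rightarrow> ((nat \<Rightarrow> 'x) \<times> 'c) pmf \<Rightarrow> (nat \<Rightarrow> 'x) pmf" where
  "jointX M P = map_pmf (Xvec M) P"

definition Xspace :: "((nat \<Rightarrow> 'x) \<times> 'c) pmf \<Rightarrow> nat \<Rightarrow> 'x set" where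
  "Xspace P m = set_pmf (map_pmf (\<lambda>w. fst w m) P)"

definition prior :: "((nat \<Rightarrow> 'x) \<times> 'c) pmf \<Rightarrow> 'c \<Rightarrow> real" where
  "prior P c = measure_pmf.prob P {w. snd w = c}"

definition Rratio :: "nat \<Rightarrow> ((nat \<Rightarrow> 'x) \<times> 'c) pmf \<Rightarrow> (nat \<Rightarrow> 'x) \<Rightarrow> real" where
  "Rratio M P x = measure_pmf.prob P {w. \<forall>m<M. fst w m = x m}
      / (\<Prod>m<M. measure_pmf.prob P {w. fst w m = x m})"

definition eexpect :: "'a pmf \<Rightarrow> ('a \<Rightarrow> ereal) \<Rightarrow> ereal" where
  "eexpect Q f = enn2ereal (\<integral>\<^sup>+ z. e2ennreal (f z) \<partial>(measure_pmf Q))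
               - enn2ereal (\<integral>\<^sup>+ z. e2ennreal (- f z) \<partial>(measure_pmf Q))"

definition TC :: "nat \<Rightarrow> ((nat \<Rightarrow> 'x) \<times> 'c) pmf \<Rightarrow> ereal" where
  "TC M P = eexpect (jointX M P) (\<lambda>x. ereal (ln (Rratio M P x)))"

definition hstar :: "((nat \<Rightarrow> 'x) \<times> 'c) pmf \<Rightarrow> nat \<Rightarrow> 'x \<Rightarrow> 'c \<Rightarrow> real" where
  "hstar P m x c = measure_pmf.prob P {w. fst w m = x \<and> snd w = c}
                   / measure_pmf.prob P {w. fst w m = x}"

definition zetastar :: "nat \<Rightarrow> ((nat \<Rightarrow> 'x) \<times> 'c) pmf \<Rightarrow> (nat \<Rightarrow> 'x) \<Rightarrow> 'c \<Rightarrow> real" where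
  "zetastar M P x c = measure_pmf.prob P {w. (\<forall>m<M. fst w m = x m) \<and> snd w = c}
                      / measure_pmf.prob P {w. \<forall>m<M. fst w m = x m}"

definition normalize_vec :: "('c::finite \<Rightarrow> real) \<Rightarrow> 'c \<Rightarrow> real" where
  "normalize_vec v = (\<lambda>c. v c / (\<Sum>d\<in>UNIV. v d))"

definition score :: "nat \<Rightarrow> (nat \<Rightarrow> 'x \<Rightarrow> 'c \<Rightarrow> real) \<Rightarrow> ('c \<Rightarrow> real) \<Rightarrow> (nat \<Rightarrow> 'x) \<Rightarrow> 'c \<Rightarrow> real" where
  "score M h p x c = (\<Prod>m<M. h m (x m) c) / (p c) ^ (M - 1)"

definition zeta :: "nat \<Rightarrow> (nat \<Rightarrow> 'x \<Rightarrow> 'c::finite \<Rightarrow> real) \<Rightarrow> ('c \<Rightarrow> real) \<Rightarrow> (nat \<Rightarrow> 'x) \<Rightarrow> 'c \<Rightarrow> real" where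
  "zeta M h p x = normalize_vec (score M h p x)"

definition elog :: "real \<Rightarrow> ereal" where
  "elog t = (if 0 < t then ereal (ln t) else -\<infinity>)"

definition TCg :: "nat \<Rightarrow> nat \<Rightarrow> (nat \<Rightarrow> (nat \<Rightarrow> 'x)) \<Rightarrow> (nat \<Rightarrow> 'x \<Rightarrow> 'c::finite \<Rightarrow> real) \<Rightarrow> ('c \<Rightarrow> real) \<Rightarrow> ereal" where
  "TCg M N s h p =
     1 + ereal (1 / real N) * (\<Sum>i<N. elog (\<Sum>c\<in>UNIV. score M h p (s i) c))
     - ereal (1 / (fact N / fact (N - M)) *
         (\<Sum>\<iota>\<in>{\<iota> \<in> {..<M} \<rightarrow>\<^sub>E {..<N}. inj_on \<iota> {..<M}}.
            \<Sum>c\<in>UNIV. (\<Prod>m<M. h m (s (\<iota> m) m) c) / (p c) ^ (M - 1)))"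

definition eTCg :: "nat \<Rightarrow> nat \<Rightarrow> ((nat \<Rightarrow> 'x) \<times> 'c::finite) pmf \<Rightarrow> (nat \<Rightarrow> 'x \<Rightarrow> 'c \<Rightarrow> real) \<Rightarrow> ('c \<Rightarrow> real) \<Rightarrow> ereal" where
  "eTCg M N P h p = eexpect (Pi_pmf {..<N} undefined (\<lambda>_. jointX M P)) (\<lambda>s. TCg M N s h p)"

definition admissible :: "nat \<Rightarrow> ((nat \<Rightarrow> 'x) \<times> 'c::finite) pmf \<Rightarrow> (nat \<Rightarrow> 'x \<Rightarrow> 'c \<Rightarrow> real) \<Rightarrow> ('c \<Rightarrow> real) \<Rightarrow> bool" where
  "admissible M P h p \<longleftrightarrow> (\<forall>m<M. \<forall>x\<in>Xspace P m. h m x \<in> prob_simplex) \<and> p \<in> prob_simplex \<and> (\<forall>c. 0 < p c)"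

end

theory Submission
  imports Defs
begin

text \<open>
  Write S x for the sum over the classes of the score, R for Rratio and Q for the product of the
  marginal laws of the features. The coordinates of an i.i.d. sample at pairwise distinct indices
  are independent, so the U-statistic term of TCg has expectation E_Q[S]. Applying
  ln t \<le> t - 1 to t = S / R gives ln S \<le> ln R + S / R - 1, and E_joint[S / R] is the
  Q-integral of S over the support of the joint law. Hence eTCg is at most TC minus the Q-integral
  of S outside that support, so at most TC. Conditional independence makes S = R for the Bayesian
  posteriors, so they attain TC. Conversely, attaining TC forces S = R on the support of Q: on the
  joint support because equality in ln t \<le> t - 1 must hold at the constant samples, which have
  positive probability, and outside it because the lost mass must vanish. Assumption (A2) then
  identifies every maximizer with the posteriors up to a relabelling of the classes.
\<close>

section \<open>Expectations of extended-real functions\<close>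

lemma eexpect_ereal:
  assumes "integrable (measure_pmf Q) u"
  shows "eexpect Q (\<lambda>z. ereal (u z)) = ereal (\<integral>z. u z \<partial>Q)"
proof -
  obtain r q where "0 \<le> r" "0 \<le> q"
    "(\<integral>\<^sup>+x. ennreal (u x)\<partial>Q) = ennreal r"
    "(\<integral>\<^sup>+x. ennreal (-u x)\<partial>Q) = ennreal q"
    "integral\<^sup>L Q u = r - q"
    by (rule integrableE[OF assms])
  then show ?thesis by (simp add: eexpect_def)
qed

lemma eexpect_cong:
  assumes "\<And>z. z \<in> set_pmf Q \<Longrightarrow> f z = g z"
  shows "eexpect Q f = eexpect Q g"
proof -
  have "(\<integral>\<^sup>+ z. e2ennreal (f z) \<partial>Q) = (\<integral>\<^sup>+ z. e2ennreal (g z) \<partial>Q)"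
    "(\<integral>\<^sup>+ z. e2ennreal (- f z) \<partial>Q) = (\<integral>\<^sup>+ z. e2ennreal (- g z) \<partial>Q)"
    by (intro nn_integral_cong_AE AE_pmfI; simp add: assms)+
  then show ?thesis by (simp add: eexpect_def)
qed

lemma eexpect_bounded_above_cases:
  assumes g: "integrable (measure_pmf Q) g"
    and le: "\<And>z. z \<in> set_pmf Q \<Longrightarrow> f z \<le> ereal (g z)"
  obtains "eexpect Q f = -\<infinity>"
    | u where "integrable (measure_pmf Q) u" "\<And>z. z \<in> set_pmf Q \<Longrightarrow> f z = ereal (u z)"
proof -
  define a where "a = (\<integral>\<^sup>+ z. e2ennreal (f z) \<partial>Q)"
  define b where "b = (\<integral>\<^sup>+ z. e2ennreal (- f z) \<partial>Q)"
  have "a \<le> (\<integral>\<^sup>+ z. ennreal (g z) \<partial>Q)"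
    unfolding a_def
    by (intro nn_integral_mono_AE AE_pmfI) (metis e2ennreal_mono e2ennreal_ereal le)
  also have "\<dots> < \<infinity>"
    using g by (simp add: real_integrable_def top.not_eq_extremum)
  finally have a_fin: "enn2ereal a \<noteq> \<infinity>" by simp
  show thesis
  proof (cases "b = \<infinity>")
    case True
    then have "eexpect Q f = -\<infinity>"
      using a_fin by (cases "enn2ereal a") (auto simp: eexpect_def a_def b_def)
    then show thesis by (rule that(1))
  next
    case False
    have not_minf: "f z \<noteq> -\<infinity>" if z: "z \<in> set_pmf Q" for z
    proof
      assume "f z = -\<infinity>"
      then have "(\<integral>\<^sup>+ y. \<infinity> * indicator {z} y \<partial>Q) \<le> b"
        unfolding b_def by (intro nn_integral_mono) (auto split: split_indicator)
      moreover have "(\<integral>\<^sup>+ y. \<infinity> * indicator {z} y \<partial>Q) = \<infinity> * ennreal (pmf Q z)"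
        by (simp add: emeasure_pmf_single)
      moreover have "pmf Q z > 0" using z by (simp add: pmf_positive)
      ultimately have "b = \<infinity>"
        by (simp add: ennreal_top_mult top_unique)
      then show False using False by simp
    qed
    define u where "u z = real_of_ereal (f z)" for z
    have f_u: "f z = ereal (u z)" if "z \<in> set_pmf Q" for z
      using le[OF that] not_minf[OF that] unfolding u_def by (cases "f z") auto
    have "a = (\<integral>\<^sup>+ z. ennreal (u z) \<partial>Q)" "b = (\<integral>\<^sup>+ z. ennreal (- u z) \<partial>Q)"
      unfolding a_def b_def by (intro nn_integral_cong_AE AE_pmfI; simp add: f_u)+
    then have "integrable (measure_pmf Q) u"
      using a_fin False by (simp add: real_integrable_def top.not_eq_extremum)
    then show thesis using f_u by (rule that(2))
  qed
qed

lemma eexpect_le_integral: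
  assumes "integrable (measure_pmf Q) g" and "\<And>z. z \<in> set_pmf Q \<Longrightarrow> f z \<le> ereal (g z)"
  shows "eexpect Q f \<le> ereal (\<integral>z. g z \<partial>Q)"
proof (rule eexpect_bounded_above_cases[OF assms])
  fix u assume u: "integrable (measure_pmf Q) u" "\<And>z. z \<in> set_pmf Q \<Longrightarrow> f z = ereal (u z)"
  have "eexpect Q f = ereal (\<integral>z. u z \<partial>Q)"
    using eexpect_cong[of Q f "\<lambda>z. ereal (u z)"] eexpect_ereal[OF u(1)] u(2) by simp
  also have "\<dots> \<le> ereal (\<integral>z. g z \<partial>Q)"
    using assms u by (auto intro!: integral_mono_AE AE_pmfI)
  finally show ?thesis .
next
  assume "eexpect Q f = -\<infinity>"
  then show ?thesis by simp
qed

lemma eexpect_eq_integralD: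
  assumes g: "integrable (measure_pmf Q) g" and le: "\<And>z. z \<in> set_pmf Q \<Longrightarrow> f z \<le> ereal (g z)"
    and eq: "eexpect Q f = ereal (\<integral>z. g z \<partial>Q)" and z: "z \<in> set_pmf Q"
  shows "f z = ereal (g z)"
proof (rule eexpect_bounded_above_cases[OF g le])
  assume "eexpect Q f = -\<infinity>"
  then show ?thesis using eq by simp
next
  fix u assume u: "integrable (measure_pmf Q) u" "\<And>z. z \<in> set_pmf Q \<Longrightarrow> f z = ereal (u z)"
  have u_le: "AE y in Q. 0 \<le> g y - u y"
    using le u(2) by (auto intro!: AE_pmfI)
  have "eexpect Q f = ereal (\<integral>y. u y \<partial>Q)"
    using eexpect_cong[of Q f "\<lambda>z. ereal (u z)"] eexpect_ereal[OF u(1)] u(2) by simp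
  then have "(\<integral>y. g y - u y \<partial>Q) = 0"
    using eq u(1) g by simp
  then have "AE y in Q. g y - u y = 0"
    using integral_nonneg_eq_0_iff_AE[OF Bochner_Integration.integrable_diff[OF g u(1)] u_le]
    by simp
  then show ?thesis
    using z u(2) by (auto simp: AE_measure_pmf_iff)
qed

lemma integrable_measure_pmf_bounded:
  fixes f :: "'a \<Rightarrow> real"
  assumes "\<And>x. x \<in> set_pmf Q \<Longrightarrow> \<bar>f x\<bar> \<le> B"
  shows "integrable (measure_pmf Q) f"
  by (rule measure_pmf.integrable_const_bound[where B=B]) (auto simp: AE_measure_pmf_iff assms)

section \<open>Products over distinct coordinates of an i.i.d. sample\<close>

lemma prod_diff_eq_fact_div:
  "k \<le> n \<Longrightarrow> (\<Prod>i<k. real (n - i)) = fact n / fact (n - k)"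
proof (induction k)
  case (Suc k)
  have "fact (n - k) = real (n - k) * fact (n - Suc k)"
    using Suc.prems by (metis Suc_diff_Suc Suc_le_lessD fact_Suc of_nat_Suc)
  moreover have "(\<Prod>i<Suc k. real (n - i)) = (\<Prod>i<k. real (n - i)) * real (n - k)"
    by (rule prod.lessThan_Suc)
  ultimately show ?case
    using Suc by (simp del: of_nat_diff)
qed simp

lemma card_inj_lessThan_funcset:
  assumes "M \<le> N"
  shows "real (card {\<iota> \<in> {..<M} \<rightarrow>\<^sub>E {..<N::nat}. inj_on \<iota> {..<M::nat}}) = fact N / fact (N - M)"
  using card_inj_on_subset_funcset[of "{..<M}" "{..<N}" "{..<M}"]
    prod_diff_eq_fact_div[OF assms]
  by (simp add: atLeast0LessThan)

lemma prod_lessThan_reindex_inj: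
  fixes H :: "nat \<Rightarrow> nat \<Rightarrow> 'b::comm_monoid_mult"
  assumes inj: "inj_on \<iota> {..<M}" and rng: "\<iota> ` {..<M} \<subseteq> {..<N}"
  shows "(\<Prod>i<N. if i \<in> \<iota> ` {..<M} then H (the_inv_into {..<M} \<iota> i) i else 1) = (\<Prod>m<M. H m (\<iota> m))"
proof -
  have "(\<Prod>i<N. if i \<in> \<iota> ` {..<M} then H (the_inv_into {..<M} \<iota> i) i else 1)
      = (\<Prod>i\<in>\<iota> ` {..<M}. if i \<in> \<iota> ` {..<M} then H (the_inv_into {..<M} \<iota> i) i else 1)"
    by (rule prod.mono_neutral_right) (use rng in auto)
  also have "\<dots> = (\<Prod>m<M. H m (\<iota> m))"
    by (simp add: prod.reindex[OF inj] the_inv_into_f_f[OF inj])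
  finally show ?thesis .
qed

lemma expectation_prod_inj_Pi_pmf:
  fixes F :: "nat \<Rightarrow> 'a \<Rightarrow> real" and \<iota> :: "nat \<Rightarrow> nat"
  assumes inj: "inj_on \<iota> {..<M}" and rng: "\<iota> ` {..<M} \<subseteq> {..<N}"
    and int: "\<And>m. m < M \<Longrightarrow> integrable (measure_pmf D) (F m)"
    and nonneg: "\<And>m y. m < M \<Longrightarrow> y \<in> set_pmf D \<Longrightarrow> 0 \<le> F m y"
  shows "(\<integral>s. (\<Prod>m<M. F m (s (\<iota> m))) \<partial>Pi_pmf {..<N} dflt (\<lambda>_. D)) = (\<Prod>m<M. \<integral>y. F m y \<partial>D)"
proof -
  define G where "G i y = (if i \<in> \<iota> ` {..<M} then F (the_inv_into {..<M} \<iota> i) y else 1)" for i y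
  have inv: "the_inv_into {..<M} \<iota> i < M" if "i \<in> \<iota> ` {..<M}" for i
    using that by (auto simp: the_inv_into_f_f[OF inj])
  have "(\<Prod>i<N. G i (s i)) = (\<Prod>m<M. F m (s (\<iota> m)))" for s
    unfolding G_def by (rule prod_lessThan_reindex_inj[OF inj rng])
  then have "(\<integral>s. (\<Prod>m<M. F m (s (\<iota> m))) \<partial>Pi_pmf {..<N} dflt (\<lambda>_. D))
      = (\<integral>s. (\<Prod>i<N. G i (s i)) \<partial>Pi_pmf {..<N} dflt (\<lambda>_. D))"
    by simp
  also have "\<dots> = (\<Prod>i<N. \<integral>y. G i y \<partial>D)"
  proof (rule expectation_prod_Pi_pmf)
    show "integrable (measure_pmf D) (G i)" for i
      by (cases "i \<in> \<iota> ` {..<M}") (simp_all add: G_def[abs_def] int inv)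
  qed (auto simp: G_def nonneg inv)
  also have "(\<Prod>i<N. \<integral>y. G i y \<partial>D)
      = (\<Prod>i<N. if i \<in> \<iota> ` {..<M} then (\<integral>y. F (the_inv_into {..<M} \<iota> i) y \<partial>D) else 1)"
    by (intro prod.cong) (simp_all add: G_def)
  also have "\<dots> = (\<Prod>m<M. \<integral>y. F m y \<partial>D)"
    by (rule prod_lessThan_reindex_inj[OF inj rng, where H = "\<lambda>m _. \<integral>y. F m y \<partial>D"])
  finally show ?thesis .
qed

section \<open>Laws of the features\<close>

lemma prob_simplex_bounds: "v \<in> prob_simplex \<Longrightarrow> 0 \<le> v c \<and> v c \<le> 1"
proof -
  assume v: "v \<in> prob_simplex"
  then have "v c \<le> (\<Sum>d\<in>UNIV. v d)" by (intro member_le_sum) (auto simp: prob_simplex_def)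
  then show ?thesis using v by (auto simp: prob_simplex_def)
qed

definition feature_law :: "((nat \<Rightarrow> 'x) \<times> 'c) pmf \<Rightarrow> nat \<Rightarrow> 'x pmf" where
  "feature_law P m = map_pmf (\<lambda>w. fst w m) P"

definition indep_law :: "nat \<Rightarrow> ((nat \<Rightarrow> 'x) \<times> 'c) pmf \<Rightarrow> (nat \<Rightarrow> 'x) pmf" where
  "indep_law M P = Pi_pmf {..<M} undefined (feature_law P)"

definition joint_prob :: "nat \<Rightarrow> ((nat \<Rightarrow> 'x) \<times> 'c) pmf \<Rightarrow> (nat \<Rightarrow> 'x) \<Rightarrow> real" where
  "joint_prob M P x = measure_pmf.prob P {w. \<forall>m<M. fst w m = x m}"

definition marginal_prod :: "nat \<Rightarrow> ((nat \<Rightarrow> 'x) \<times> 'c) pmf \<Rightarrow> (nat \<Rightarrow> 'x) \<Rightarrow> real" where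
  "marginal_prod M P x = (\<Prod>m<M. measure_pmf.prob P {w. fst w m = x m})"

definition feature_box :: "nat \<Rightarrow> ((nat \<Rightarrow> 'x) \<times> 'c) pmf \<Rightarrow> (nat \<Rightarrow> 'x) set" where
  "feature_box M P = {x \<in> {..<M} \<rightarrow>\<^sub>E UNIV. \<forall>m<M. x m \<in> Xspace P m}"

definition total_score :: "nat \<Rightarrow> (nat \<Rightarrow> 'x \<Rightarrow> 'c::finite \<Rightarrow> real) \<Rightarrow> ('c \<Rightarrow> real) \<Rightarrow> (nat \<Rightarrow> 'x) \<Rightarrow> real" where
  "total_score M h p x = (\<Sum>c\<in>UNIV. score M h p x c)"

lemma pmf_feature_law: "pmf (feature_law P m) y = measure_pmf.prob P {w. fst w m = y}"
  by (simp add: feature_law_def pmf_map vimage_def)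

lemma Xspace_eq_set_feature_law: "Xspace P m = set_pmf (feature_law P m)"
  by (simp add: Xspace_def feature_law_def)

lemma prob_feature_pos: "y \<in> Xspace P m \<Longrightarrow> 0 < measure_pmf.prob P {w. fst w m = y}"
  by (metis Xspace_eq_set_feature_law pmf_feature_law pmf_positive)

lemma pmf_indep_law: "x \<in> {..<M} \<rightarrow>\<^sub>E UNIV \<Longrightarrow> pmf (indep_law M P) x = marginal_prod M P x"
  unfolding indep_law_def marginal_prod_def
  by (subst pmf_Pi) (auto simp: pmf_feature_law PiE_def extensional_def)

lemma set_indep_law: "set_pmf (indep_law M P) = feature_box M P"
  unfolding indep_law_def feature_box_def
  by (subst set_Pi_pmf) (auto simp: PiE_dflt_def Xspace_eq_set_feature_law PiE_def extensional_def)

lemma pmf_jointX: "x \<in> {..<M} \<rightarrow>\<^sub>E UNIV \<Longrightarrow> pmf (jointX M P) x = joint_prob M P x"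
proof -
  assume x: "x \<in> {..<M} \<rightarrow>\<^sub>E UNIV"
  have eq: "Xvec M -` {x} = {w. \<forall>m<M. fst w m = x m}"
    using x by (auto simp: Xvec_def restrict_def PiE_def extensional_def fun_eq_iff)
  show ?thesis unfolding jointX_def pmf_map joint_prob_def eq ..
qed

lemma set_jointX_subset: "set_pmf (jointX M P) \<subseteq> feature_box M P"
  by (auto simp: jointX_def Xvec_def Xspace_def feature_box_def PiE_def extensional_def) force

lemma set_jointX_Xspace: "x \<in> set_pmf (jointX M P) \<Longrightarrow> m < M \<Longrightarrow> x m \<in> Xspace P m"
  using set_jointX_subset[of M P] unfolding feature_box_def by blast

lemma jointX_component: "m < M \<Longrightarrow> map_pmf (\<lambda>x. x m) (jointX M P) = feature_law P m"
  by (simp add: jointX_def feature_law_def pmf.map_comp o_def Xvec_def)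

lemma marginal_prod_pos: "x \<in> feature_box M P \<Longrightarrow> 0 < marginal_prod M P x"
  unfolding marginal_prod_def feature_box_def by (auto intro!: prod_pos prob_feature_pos)

lemma Rratio_eq_div: "Rratio M P x = joint_prob M P x / marginal_prod M P x"
  by (simp add: Rratio_def joint_prob_def marginal_prod_def)

lemma set_jointX_iff:
  "x \<in> feature_box M P \<Longrightarrow> x \<in> set_pmf (jointX M P) \<longleftrightarrow> 0 < joint_prob M P x"
  using pmf_jointX[of x M P]
  by (auto simp: feature_box_def set_pmf_iff joint_prob_def order_less_le)

lemma Rratio_pos: "x \<in> set_pmf (jointX M P) \<Longrightarrow> 0 < Rratio M P x"
  using set_jointX_subset[of M P] set_jointX_iff[of x M P] marginal_prod_pos[of x M P]
  by (auto simp: Rratio_eq_div)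

lemma Rratio_eq_0: "x \<in> feature_box M P \<Longrightarrow> x \<notin> set_pmf (jointX M P) \<Longrightarrow> Rratio M P x = 0"
  using set_jointX_iff[of x M P] by (simp add: Rratio_eq_div joint_prob_def measure_le_0_iff not_less)

lemma Rratio_restrict: "Rratio M P (restrict x {..<M}) = Rratio M P x"
  unfolding Rratio_def by (simp cong: conj_cong)

lemma score_restrict: "score M h p (restrict x {..<M}) c = score M h p x c"
  unfolding score_def by simp

lemma sum_prob_label:
  fixes P :: "('a \<times> 'c::finite) pmf"
  shows "(\<Sum>c\<in>UNIV. measure_pmf.prob P {w. A w \<and> snd w = c}) = measure_pmf.prob P {w. A w}"
proof -
  have "measure_pmf.prob P (\<Union>c. {w. A w \<and> snd w = c}) =
      (\<Sum>c\<in>UNIV. measure_pmf.prob P {w. A w \<and> snd w = c})"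
    by (rule measure_pmf.finite_measure_finite_Union) (auto simp: disjoint_family_on_def)
  moreover have "(\<Union>c. {w. A w \<and> snd w = c}) = {w. A w}" by auto
  ultimately show ?thesis by simp
qed

lemma admissible_bounds:
  "admissible M P h p \<Longrightarrow> m < M \<Longrightarrow> y \<in> Xspace P m \<Longrightarrow> 0 \<le> h m y c \<and> h m y c \<le> 1"
  by (rule prob_simplex_bounds) (simp add: admissible_def)

lemma total_score_bounds:
  assumes adm: "admissible M P h p" and x: "x \<in> feature_box M P"
  shows "0 \<le> total_score M h p x \<and> total_score M h p x \<le> (\<Sum>c\<in>UNIV. 1 / p c ^ (M - 1))"
proof -
  have "0 \<le> score M h p x c \<and> score M h p x c \<le> 1 / p c ^ (M - 1)" for c
  proof -
    have h: "0 \<le> h m (x m) c \<and> h m (x m) c \<le> 1" if "m < M" for m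
      using admissible_bounds[OF adm that] x that by (auto simp: feature_box_def)
    have "0 \<le> (\<Prod>m<M. h m (x m) c)" "(\<Prod>m<M. h m (x m) c) \<le> 1"
      using h by (auto intro!: prod_nonneg prod_le_1)
    moreover have "0 < p c" using adm by (simp add: admissible_def)
    ultimately show ?thesis unfolding score_def by (auto intro!: divide_right_mono)
  qed
  then show ?thesis unfolding total_score_def by (auto intro!: sum_nonneg sum_mono)
qed

lemma integral_total_score_indep_law:
  assumes adm: "admissible M P h p"
  shows "integrable (measure_pmf (indep_law M P)) (total_score M h p)"
    and "(\<integral>x. total_score M h p x \<partial>indep_law M P)
        = (\<Sum>c\<in>UNIV. (\<Prod>m<M. \<integral>y. h m y c \<partial>feature_law P m) / p c ^ (M - 1))"
proof -
  have int_h: "integrable (measure_pmf (feature_law P m)) (\<lambda>y. h m y c)" if "m < M" for m c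
    using admissible_bounds[OF adm that]
    by (intro integrable_measure_pmf_bounded[where B=1]) (force simp: Xspace_eq_set_feature_law)
  show "integrable (measure_pmf (indep_law M P)) (total_score M h p)"
    by (rule integrable_measure_pmf_bounded[where B="\<Sum>c\<in>UNIV. 1 / p c ^ (M - 1)"])
       (use total_score_bounds[OF adm] in \<open>auto simp: set_indep_law\<close>)
  have int_prod: "integrable (measure_pmf (indep_law M P)) (\<lambda>x. \<Prod>m<M. h m (x m) c)" for c
    unfolding indep_law_def by (rule integrable_prod_Pi_pmf) (auto intro: int_h)
  have "(\<integral>x. (\<Prod>m<M. h m (x m) c) \<partial>indep_law M P) = (\<Prod>m<M. \<integral>y. h m y c \<partial>feature_law P m)" for c
    unfolding indep_law_def
    by (rule expectation_prod_Pi_pmf)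
       (auto intro: int_h dest: admissible_bounds[OF adm] simp: Xspace_eq_set_feature_law)
  then show "(\<integral>x. total_score M h p x \<partial>indep_law M P)
        = (\<Sum>c\<in>UNIV. (\<Prod>m<M. \<integral>y. h m y c \<partial>feature_law P m) / p c ^ (M - 1))"
    unfolding total_score_def score_def by (simp add: int_prod)
qed

text \<open>Rratio is the density of the joint law with respect to the product of the marginals.\<close>

lemma integral_div_Rratio:
  assumes G: "\<And>x. x \<in> feature_box M P \<Longrightarrow> 0 \<le> G x \<and> G x \<le> C"
  shows "integrable (measure_pmf (jointX M P)) (\<lambda>x. G x / Rratio M P x)"
    and "(\<integral>x. G x / Rratio M P x \<partial>jointX M P)
        = (\<integral>x. G x * indicator (set_pmf (jointX M P)) x \<partial>indep_law M P)"
proof -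
  let ?J = "jointX M P" and ?Q = "indep_law M P"
  have pmf_eq: "ennreal (pmf ?J x) * ennreal (G x / Rratio M P x)
      = ennreal (pmf ?Q x) * ennreal (G x * indicator (set_pmf ?J) x)" for x
  proof (cases "x \<in> set_pmf ?J")
    case True
    then have x: "x \<in> feature_box M P" using set_jointX_subset[of M P] by blast
    then have ext: "x \<in> {..<M} \<rightarrow>\<^sub>E UNIV" by (simp add: feature_box_def)
    have pos: "0 < joint_prob M P x" "0 < marginal_prod M P x" "0 \<le> G x"
      using set_jointX_iff[OF x] True marginal_prod_pos[OF x] G[OF x] by auto
    then have "pmf ?J x * (G x / Rratio M P x) = pmf ?Q x * G x"
      by (simp add: pmf_jointX[OF ext] pmf_indep_law[OF ext] Rratio_eq_div)
    then show ?thesis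
      using True pos by (simp add: ennreal_mult[symmetric] Rratio_eq_div)
  qed (simp add: set_pmf_iff)
  then have nn: "(\<integral>\<^sup>+x. ennreal (G x / Rratio M P x) \<partial>?J)
      = (\<integral>\<^sup>+x. ennreal (G x * indicator (set_pmf ?J) x) \<partial>?Q)"
    by (simp add: nn_integral_measure_pmf)
  have C: "0 \<le> C" if "x \<in> feature_box M P" for x using G[OF that] by simp
  have int_Q: "integrable (measure_pmf ?Q) (\<lambda>x. G x * indicator (set_pmf ?J) x)"
    by (rule integrable_measure_pmf_bounded[where B=C])
       (auto simp: set_indep_law G C split: split_indicator)
  have nonneg_J: "AE x in ?J. 0 \<le> G x / Rratio M P x"
  proof (rule AE_pmfI)
    fix x assume "x \<in> set_pmf ?J"
    then show "0 \<le> G x / Rratio M P x"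
      using G set_jointX_subset[of M P] Rratio_pos[of x M P] by (auto intro!: divide_nonneg_pos)
  qed
  have nonneg_Q: "AE x in ?Q. 0 \<le> G x * indicator (set_pmf ?J) x"
    using G by (auto intro!: AE_pmfI simp: set_indep_law split: split_indicator)
  have "(\<integral>\<^sup>+x. ennreal (G x * indicator (set_pmf ?J) x) \<partial>?Q) < \<infinity>"
    using int_Q by (simp add: real_integrable_def top.not_eq_extremum)
  then show int_J: "integrable (measure_pmf ?J) (\<lambda>x. G x / Rratio M P x)"
    using nonneg_J nn by (intro integrableI_nonneg) auto
  have "ennreal (\<integral>x. G x / Rratio M P x \<partial>?J) = ennreal (\<integral>x. G x * indicator (set_pmf ?J) x \<partial>?Q)"
    using nn nn_integral_eq_integral[OF int_J nonneg_J] nn_integral_eq_integral[OF int_Q nonneg_Q]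
    by simp
  then show "(\<integral>x. G x / Rratio M P x \<partial>?J) = (\<integral>x. G x * indicator (set_pmf ?J) x \<partial>?Q)"
    using integral_nonneg_AE[OF nonneg_J] integral_nonneg_AE[OF nonneg_Q] by simp
qed

section \<open>The U-statistic term of TCg\<close>

definition ustat :: "nat \<Rightarrow> nat \<Rightarrow> (nat \<Rightarrow> 'x \<Rightarrow> 'c::finite \<Rightarrow> real) \<Rightarrow> ('c \<Rightarrow> real) \<Rightarrow> (nat \<Rightarrow> nat \<Rightarrow> 'x) \<Rightarrow> real" where
  "ustat M N h p s = 1 / (fact N / fact (N - M)) *
     (\<Sum>\<iota>\<in>{\<iota> \<in> {..<M} \<rightarrow>\<^sub>E {..<N}. inj_on \<iota> {..<M}}.
        \<Sum>c\<in>UNIV. (\<Prod>m<M. h m (s (\<iota> m) m) c) / (p c) ^ (M - 1))"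

lemma TCg_eq_ustat:
  "TCg M N s h p = 1 + ereal (1 / real N) * (\<Sum>i<N. elog (total_score M h p (s i))) - ereal (ustat M N h p s)"
  by (simp add: TCg_def ustat_def total_score_def)

abbreviation sample_law :: "nat \<Rightarrow> nat \<Rightarrow> ((nat \<Rightarrow> 'x) \<times> 'c) pmf \<Rightarrow> (nat \<Rightarrow> nat \<Rightarrow> 'x) pmf" where
  "sample_law M N P \<equiv> Pi_pmf {..<N} undefined (\<lambda>_. jointX M P)"

lemma set_sample_law: "s \<in> set_pmf (sample_law M N P) \<Longrightarrow> i < N \<Longrightarrow> s i \<in> set_pmf (jointX M P)"
  by (auto simp: set_Pi_pmf PiE_dflt_def)

lemma constant_sample_in_set:
  "x \<in> set_pmf (jointX M P) \<Longrightarrow> (\<lambda>i. if i < N then x else undefined) \<in> set_pmf (sample_law M N P)"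
  by (auto simp: set_Pi_pmf PiE_dflt_def)

lemma integral_sample_component:
  fixes f :: "(nat \<Rightarrow> 'x) \<Rightarrow> real"
  assumes i: "i < N" and f: "integrable (measure_pmf (jointX M P)) f"
  shows "integrable (measure_pmf (sample_law M N P)) (\<lambda>s. f (s i))"
    and "(\<integral>s. f (s i) \<partial>sample_law M N P) = (\<integral>x. f x \<partial>jointX M P)"
proof -
  have law: "map_pmf (\<lambda>s. s i) (sample_law M N P) = jointX M P"
    using i by (simp add: Pi_pmf_component)
  show "integrable (measure_pmf (sample_law M N P)) (\<lambda>s. f (s i))"
    using f integrable_map_pmf_eq[of "\<lambda>s. s i" "sample_law M N P" f] law by simp
  show "(\<integral>s. f (s i) \<partial>sample_law M N P) = (\<integral>x. f x \<partial>jointX M P)"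
    using integral_map_pmf[of "\<lambda>s. s i" "sample_law M N P" f] law by simp
qed

lemma integral_prod_inj_sample:
  assumes adm: "admissible M P h p"
    and \<iota>: "\<iota> \<in> {..<M} \<rightarrow>\<^sub>E {..<N}" "inj_on \<iota> {..<M}"
  shows "integrable (measure_pmf (sample_law M N P)) (\<lambda>s. \<Prod>m<M. h m (s (\<iota> m) m) c)"
    and "(\<integral>s. (\<Prod>m<M. h m (s (\<iota> m) m) c) \<partial>sample_law M N P)
        = (\<Prod>m<M. \<integral>y. h m y c \<partial>feature_law P m)"
proof -
  have h_bounds: "0 \<le> h m (y m) c \<and> h m (y m) c \<le> 1"
    if "m < M" "y \<in> set_pmf (jointX M P)" for m y
    using admissible_bounds[OF adm that(1) set_jointX_Xspace[OF that(2,1)]] .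
  show "integrable (measure_pmf (sample_law M N P)) (\<lambda>s. \<Prod>m<M. h m (s (\<iota> m) m) c)"
  proof (rule integrable_measure_pmf_bounded[where B=1])
    fix s assume s: "s \<in> set_pmf (sample_law M N P)"
    have "0 \<le> h m (s (\<iota> m) m) c \<and> h m (s (\<iota> m) m) c \<le> 1" if "m < M" for m
    proof -
      have "\<iota> m < N" using \<iota> that by auto
      then show ?thesis by (rule h_bounds[OF that set_sample_law[OF s]])
    qed
    then have "0 \<le> (\<Prod>m<M. h m (s (\<iota> m) m) c)" "(\<Prod>m<M. h m (s (\<iota> m) m) c) \<le> 1"
      by (auto intro!: prod_le_1 prod_nonneg)
    then show "\<bar>\<Prod>m<M. h m (s (\<iota> m) m) c\<bar> \<le> 1" by simp
  qed
  have "integrable (measure_pmf (jointX M P)) (\<lambda>y. h m (y m) c)" if "m < M" for m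
    using h_bounds[OF that] by (intro integrable_measure_pmf_bounded[where B=1]) (simp add: abs_le_iff)
  then have "(\<integral>s. (\<Prod>m<M. h m (s (\<iota> m) m) c) \<partial>sample_law M N P)
      = (\<Prod>m<M. \<integral>y. h m (y m) c \<partial>jointX M P)"
    using \<iota> by (intro expectation_prod_inj_Pi_pmf) (auto simp: h_bounds)
  also have "\<dots> = (\<Prod>m<M. \<integral>y. h m y c \<partial>feature_law P m)"
    by (intro prod.cong refl) (simp flip: jointX_component)
  finally show "(\<integral>s. (\<Prod>m<M. h m (s (\<iota> m) m) c) \<partial>sample_law M N P)
      = (\<Prod>m<M. \<integral>y. h m y c \<partial>feature_law P m)" .
qed

lemma integral_ustat:
  assumes adm: "admissible M P h p" and MN: "M \<le> N"
  shows "integrable (measure_pmf (sample_law M N P)) (ustat M N h p)"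
    and "(\<integral>s. ustat M N h p s \<partial>sample_law M N P) = (\<integral>x. total_score M h p x \<partial>indep_law M P)"
proof -
  define Inj where "Inj = {\<iota> \<in> {..<M} \<rightarrow>\<^sub>E {..<N}. inj_on \<iota> {..<M}}"
  define A :: real where "A = fact N / fact (N - M)"
  note prod_inj = integral_prod_inj_sample[OF adm]
  have int_sum: "integrable (measure_pmf (sample_law M N P))
      (\<lambda>s. \<Sum>c\<in>UNIV. (\<Prod>m<M. h m (s (\<iota> m) m) c) / p c ^ (M - 1))" if "\<iota> \<in> Inj" for \<iota>
    using that unfolding Inj_def by (intro Bochner_Integration.integrable_sum integrable_divide prod_inj) auto
  have ustat_eq: "ustat M N h p = (\<lambda>s. 1 / A *
      (\<Sum>\<iota>\<in>Inj. \<Sum>c\<in>UNIV. (\<Prod>m<M. h m (s (\<iota> m) m) c) / p c ^ (M - 1)))"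
    by (simp add: ustat_def Inj_def A_def fun_eq_iff)
  show "integrable (measure_pmf (sample_law M N P)) (ustat M N h p)"
    unfolding ustat_eq by (intro integrable_mult_right Bochner_Integration.integrable_sum int_sum)
  have "(\<integral>s. ustat M N h p s \<partial>sample_law M N P)
      = 1 / A * (\<Sum>\<iota>\<in>Inj. \<Sum>c\<in>UNIV. (\<Prod>m<M. \<integral>y. h m y c \<partial>feature_law P m) / p c ^ (M - 1))"
    unfolding ustat_eq integral_mult_right_zero
  proof (intro arg_cong2[where f = "(*)"] refl, subst Bochner_Integration.integral_sum)
    show "(\<Sum>\<iota>\<in>Inj. \<integral>s. (\<Sum>c\<in>UNIV. (\<Prod>m<M. h m (s (\<iota> m) m) c) / p c ^ (M - 1)) \<partial>sample_law M N P)
        = (\<Sum>\<iota>\<in>Inj. \<Sum>c\<in>UNIV. (\<Prod>m<M. \<integral>y. h m y c \<partial>feature_law P m) / p c ^ (M - 1))"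
      using prod_inj unfolding Inj_def
      by (intro sum.cong refl) (simp add: Bochner_Integration.integral_sum integrable_divide)
  qed (rule int_sum)
  also have "\<dots> = (\<Sum>c\<in>UNIV. (\<Prod>m<M. \<integral>y. h m y c \<partial>feature_law P m) / p c ^ (M - 1))"
    using card_inj_lessThan_funcset[OF MN] by (simp add: A_def Inj_def)
  also have "\<dots> = (\<integral>x. total_score M h p x \<partial>indep_law M P)"
    by (rule integral_total_score_indep_law(2)[OF adm, symmetric])
  finally show "(\<integral>s. ustat M N h p s \<partial>sample_law M N P) = (\<integral>x. total_score M h p x \<partial>indep_law M P)" .
qed

section \<open>A majorant of TCg\<close>

lemma abs_ln_le:
  fixes r B :: real
  assumes "0 < r" "r \<le> B"
  shows "\<bar>ln r\<bar> \<le> \<bar>ln B\<bar> + 1 / r"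
proof (cases "1 \<le> r")
  case True
  then have "0 \<le> ln r" "ln r \<le> ln B" "0 < 1 / r" using assms by simp_all
  then show ?thesis using abs_ge_self[of "ln B"] by linarith
next
  case False
  have "ln (1 / r) \<le> 1 / r - 1" using assms by (intro ln_le_minus_one) simp
  then show ?thesis using False assms by (simp add: ln_div)
qed

definition log_majorant :: "nat \<Rightarrow> ((nat \<Rightarrow> 'x) \<times> 'c) pmf \<Rightarrow> (nat \<Rightarrow> 'x \<Rightarrow> 'c::finite \<Rightarrow> real) \<Rightarrow> ('c \<Rightarrow> real) \<Rightarrow> (nat \<Rightarrow> 'x) \<Rightarrow> real" where
  "log_majorant M P h p x = ln (Rratio M P x) + total_score M h p x / Rratio M P x - 1"

definition TCg_majorant :: "nat \<Rightarrow> nat \<Rightarrow> ((nat \<Rightarrow> 'x) \<times> 'c) pmf \<Rightarrow> (nat \<Rightarrow> 'x \<Rightarrow> 'c::finite \<Rightarrow> real) \<Rightarrow> ('c \<Rightarrow> real) \<Rightarrow> (nat \<Rightarrow> nat \<Rightarrow> 'x) \<Rightarrow> real" where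
  "TCg_majorant M N P h p s = 1 + 1 / real N * (\<Sum>i<N. log_majorant M P h p (s i)) - ustat M N h p s"

definition off_support_score :: "nat \<Rightarrow> ((nat \<Rightarrow> 'x) \<times> 'c) pmf \<Rightarrow> (nat \<Rightarrow> 'x \<Rightarrow> 'c::finite \<Rightarrow> real) \<Rightarrow> ('c \<Rightarrow> real) \<Rightarrow> real" where
  "off_support_score M P h p =
     (\<integral>x. total_score M h p x * (1 - indicator (set_pmf (jointX M P)) x) \<partial>indep_law M P)"

lemma elog_le_log_majorant:
  assumes "x \<in> set_pmf (jointX M P)"
  shows "elog (total_score M h p x) \<le> ereal (log_majorant M P h p x)"
proof (cases "0 < total_score M h p x")
  case True
  let ?S = "total_score M h p x" and ?R = "Rratio M P x"
  have R: "0 < ?R" using Rratio_pos[OF assms] .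
  have "ln (?S / ?R) \<le> ?S / ?R - 1"
    using True R by (intro ln_le_minus_one) simp
  then show ?thesis
    using True R by (simp add: elog_def log_majorant_def ln_div)
qed (simp add: elog_def)

lemma elog_eq_log_majorantD:
  assumes x: "x \<in> set_pmf (jointX M P)"
    and eq: "elog (total_score M h p x) = ereal (log_majorant M P h p x)"
  shows "total_score M h p x = Rratio M P x"
proof -
  let ?S = "total_score M h p x" and ?R = "Rratio M P x"
  have R: "0 < ?R" using Rratio_pos[OF x] .
  have S: "0 < ?S" using eq by (auto simp: elog_def split: if_splits)
  have "ln (?S / ?R) = ?S / ?R - 1"
    using eq S R by (simp add: elog_def log_majorant_def ln_div)
  then have "?S / ?R = 1"
    by (rule ln_eq_minus_one[rotated]) (use S R in simp)
  then show ?thesis using R by simp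
qed

lemma TCg_le_majorant:
  assumes "s \<in> set_pmf (sample_law M N P)"
  shows "TCg M N s h p \<le> ereal (TCg_majorant M N P h p s)"
proof -
  have "(\<Sum>i<N. elog (total_score M h p (s i))) \<le> (\<Sum>i<N. ereal (log_majorant M P h p (s i)))"
    by (intro sum_mono elog_le_log_majorant set_sample_law[OF assms]) simp
  then have "ereal (1 / real N) * (\<Sum>i<N. elog (total_score M h p (s i)))
      \<le> ereal (1 / real N) * ereal (\<Sum>i<N. log_majorant M P h p (s i))"
    by (intro ereal_mult_left_mono) simp_all
  then have "TCg M N s h p \<le> 1 + ereal (1 / real N) * ereal (\<Sum>i<N. log_majorant M P h p (s i))
      - ereal (ustat M N h p s)"
    unfolding TCg_eq_ustat by (intro ereal_minus_mono add_left_mono order_refl)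
  also have "\<dots> = ereal (TCg_majorant M N P h p s)"
    by (simp add: TCg_majorant_def one_ereal_def)
  finally show ?thesis .
qed

lemma sum_elog_const:
  assumes "0 < N"
  shows "ereal (1 / real N) * (\<Sum>i<N. elog t) = elog t"
proof (cases "0 < t")
  case False
  have "(\<Sum>i<N. -\<infinity>) = (-\<infinity> :: ereal)"
    using assms by (induction N) (auto simp: sum_Pinfty)
  then show ?thesis using False assms by (simp add: elog_def)
qed (use assms in \<open>simp add: elog_def\<close>)

lemma TCg_eq_majorant_const_sampleD:
  assumes N: "0 < N" and x: "x \<in> set_pmf (jointX M P)"
    and eq: "TCg M N (\<lambda>i. if i < N then x else undefined) h p
           = ereal (TCg_majorant M N P h p (\<lambda>i. if i < N then x else undefined))"
  shows "total_score M h p x = Rratio M P x"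
proof (rule elog_eq_log_majorantD[OF x])
  define s where "s = (\<lambda>i. if i < N then x else (undefined :: nat \<Rightarrow> 'a))"
  have "ereal (1 / real N) * (\<Sum>i<N. elog (total_score M h p (s i))) = elog (total_score M h p x)"
    using sum_elog_const[OF N] by (simp add: s_def)
  moreover have "1 / real N * (\<Sum>i<N. log_majorant M P h p (s i)) = log_majorant M P h p x"
    using N by (simp add: s_def)
  ultimately have "1 + elog (total_score M h p x) - ereal (ustat M N h p s)
      = ereal (1 + log_majorant M P h p x - ustat M N h p s)"
    using eq unfolding TCg_eq_ustat TCg_majorant_def s_def by simp
  then show "elog (total_score M h p x) = ereal (log_majorant M P h p x)"
    by (cases "elog (total_score M h p x)") (simp_all add: one_ereal_def)
qed

lemma off_support_score_split:
  assumes adm: "admissible M P h p"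
  shows "(\<integral>x. total_score M h p x \<partial>indep_law M P)
      = (\<integral>x. total_score M h p x * indicator (set_pmf (jointX M P)) x \<partial>indep_law M P)
        + off_support_score M P h p"
    and "0 \<le> off_support_score M P h p"
    and "off_support_score M P h p = 0 \<Longrightarrow> x \<in> feature_box M P \<Longrightarrow> x \<notin> set_pmf (jointX M P)
        \<Longrightarrow> total_score M h p x = 0"
proof -
  let ?S = "total_score M h p" and ?J = "set_pmf (jointX M P)"
  have bounds: "0 \<le> ?S x * f \<and> ?S x * f \<le> (\<Sum>c\<in>UNIV. 1 / p c ^ (M - 1))"
    if "x \<in> feature_box M P" "0 \<le> f" "f \<le> 1" for x and f :: real
    using total_score_bounds[OF adm that(1)] that(2,3)
    by (auto intro: mult_nonneg_nonneg order_trans[OF mult_left_le])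
  have int: "integrable (measure_pmf (indep_law M P)) (\<lambda>x. ?S x * f x)"
    if "\<And>x. 0 \<le> f x \<and> f x \<le> 1" for f
    by (rule integrable_measure_pmf_bounded[where B="\<Sum>c\<in>UNIV. 1 / p c ^ (M - 1)"])
       (use bounds that in \<open>auto simp: set_indep_law\<close>)
  have nonneg: "AE x in indep_law M P. 0 \<le> ?S x * (1 - indicator ?J x)"
    using bounds by (intro AE_pmfI) (simp add: set_indep_law split: split_indicator)
  have "?S x = ?S x * indicator ?J x + ?S x * (1 - indicator ?J x)" for x
    by (simp add: algebra_simps)
  then show "(\<integral>x. ?S x \<partial>indep_law M P)
      = (\<integral>x. ?S x * indicator ?J x \<partial>indep_law M P) + off_support_score M P h p"
    unfolding off_support_score_def
    by (subst Bochner_Integration.integral_add[symmetric]) (auto intro!: int split: split_indicator)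
  show "0 \<le> off_support_score M P h p"
    unfolding off_support_score_def by (rule integral_nonneg_AE[OF nonneg])
  assume "off_support_score M P h p = 0" and x: "x \<in> feature_box M P" "x \<notin> ?J"
  then have "AE x in indep_law M P. ?S x * (1 - indicator ?J x) = 0"
    using integral_nonneg_eq_0_iff_AE[OF int nonneg]
    by (simp add: off_support_score_def split: split_indicator)
  then show "?S x = 0"
    using x by (auto simp: AE_measure_pmf_iff set_indep_law)
qed

section \<open>Optimality of the Bayesian posteriors\<close>

locale cond_indep_model =
  fixes P :: "((nat \<Rightarrow> 'x) \<times> 'c::finite) pmf" and M :: nat
  assumes M_pos: "0 < M"
    and prior_pos: "\<forall>c. 0 < prior P c"
    and cond_indep: "\<forall>x \<in> {..<M} \<rightarrow>\<^sub>E (UNIV :: 'x set). \<forall>c.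
        measure_pmf.prob P {w. (\<forall>m<M. fst w m = x m) \<and> snd w = c} / prior P c
        = (\<Prod>m<M. measure_pmf.prob P {w. fst w m = x m \<and> snd w = c} / prior P c)"
begin

lemma score_hstar:
  assumes x: "x \<in> feature_box M P"
  shows "score M (hstar P) (prior P) x c
       = measure_pmf.prob P {w. (\<forall>m<M. fst w m = x m) \<and> snd w = c} / marginal_prod M P x"
proof -
  define p where "p = prior P c"
  define a where "a m = measure_pmf.prob P {w. fst w m = x m \<and> snd w = c}" for m
  define j where "j = measure_pmf.prob P {w. (\<forall>m<M. fst w m = x m) \<and> snd w = c}"
  have p: "0 < p" using prior_pos by (simp add: p_def)
  have "j / p = (\<Prod>m<M. a m / p)"
    using cond_indep x by (simp add: j_def a_def p_def feature_box_def)
  also have "\<dots> = (\<Prod>m<M. a m) / (p * p ^ (M - 1))"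
    using M_pos by (simp add: prod_dividef power_Suc[symmetric])
  finally have prod_a: "(\<Prod>m<M. a m) = j * p ^ (M - 1)"
    using p by (simp add: field_simps)
  have "score M (hstar P) (prior P) x c = (\<Prod>m<M. a m) / marginal_prod M P x / p ^ (M - 1)"
    by (simp add: score_def hstar_def a_def p_def prod_dividef marginal_prod_def)
  then show ?thesis
    using prod_a p by (simp add: j_def)
qed

lemma total_score_hstar:
  "x \<in> feature_box M P \<Longrightarrow> total_score M (hstar P) (prior P) x = Rratio M P x"
  using sum_prob_label[of P "\<lambda>w. \<forall>m<M. fst w m = x m"]
  by (simp add: total_score_def score_hstar sum_divide_distrib[symmetric] Rratio_eq_div joint_prob_def)

lemma admissible_hstar: "admissible M P (hstar P) (prior P)"
proof -
  have "hstar P m y \<in> prob_simplex" if "y \<in> Xspace P m" for m y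
    using prob_feature_pos[OF that] sum_prob_label[of P "\<lambda>w. fst w m = y"]
    by (simp add: prob_simplex_def hstar_def sum_divide_distrib[symmetric])
  moreover have "prior P \<in> prob_simplex"
    using sum_prob_label[of P "\<lambda>w. True"] by (simp add: prob_simplex_def prior_def)
  ultimately show ?thesis
    using prior_pos by (simp add: admissible_def)
qed

lemma zeta_hstar:
  assumes x: "x \<in> set_pmf (jointX M P)"
  shows "zeta M (hstar P) (prior P) x c = zetastar M P x c"
proof -
  have box: "x \<in> feature_box M P" using x set_jointX_subset by blast
  have "0 < joint_prob M P x" "0 < marginal_prod M P x"
    using set_jointX_iff[OF box] x marginal_prod_pos[OF box] by auto
  then show ?thesis
    using total_score_hstar[OF box]
    by (simp add: zeta_def normalize_vec_def zetastar_def score_hstar[OF box]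
        total_score_def Rratio_eq_div joint_prob_def)
qed

lemma Rratio_le: "x \<in> feature_box M P \<Longrightarrow> Rratio M P x \<le> (\<Sum>c\<in>UNIV. 1 / prior P c ^ (M - 1))"
  using total_score_bounds[OF admissible_hstar] total_score_hstar by metis

lemma integrable_ln_Rratio: "integrable (measure_pmf (jointX M P)) (\<lambda>x. ln (Rratio M P x))"
proof (rule Bochner_Integration.integrable_bound)
  let ?B = "\<Sum>c\<in>UNIV. 1 / prior P c ^ (M - 1)"
  show "integrable (measure_pmf (jointX M P)) (\<lambda>x. \<bar>ln ?B\<bar> + 1 / Rratio M P x)"
    using integral_div_Rratio(1)[of M P "\<lambda>_. 1" 1] by simp
  show "AE x in jointX M P. norm (ln (Rratio M P x)) \<le> norm (\<bar>ln ?B\<bar> + 1 / Rratio M P x)"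
  proof (rule AE_pmfI)
    fix x assume x: "x \<in> set_pmf (jointX M P)"
    then have "\<bar>ln (Rratio M P x)\<bar> \<le> \<bar>ln ?B\<bar> + 1 / Rratio M P x"
      using Rratio_pos Rratio_le set_jointX_subset by (blast intro: abs_ln_le)
    then show "norm (ln (Rratio M P x)) \<le> norm (\<bar>ln ?B\<bar> + 1 / Rratio M P x)"
      using Rratio_pos[OF x] by simp
  qed
qed simp

lemma TC_eq_integral: "TC M P = ereal (\<integral>x. ln (Rratio M P x) \<partial>jointX M P)"
  unfolding TC_def by (rule eexpect_ereal[OF integrable_ln_Rratio])

lemma integral_log_majorant:
  assumes adm: "admissible M P h p"
  shows "integrable (measure_pmf (jointX M P)) (log_majorant M P h p)"
    and "(\<integral>x. log_majorant M P h p x \<partial>jointX M P) = (\<integral>x. ln (Rratio M P x) \<partial>jointX M P)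
        + (\<integral>x. total_score M h p x * indicator (set_pmf (jointX M P)) x \<partial>indep_law M P) - 1"
proof -
  note bounds = total_score_bounds[OF adm]
  have "log_majorant M P h p = (\<lambda>x. ln (Rratio M P x) + total_score M h p x / Rratio M P x - 1)"
    by (simp add: log_majorant_def fun_eq_iff)
  then show "integrable (measure_pmf (jointX M P)) (log_majorant M P h p)"
    and "(\<integral>x. log_majorant M P h p x \<partial>jointX M P) = (\<integral>x. ln (Rratio M P x) \<partial>jointX M P)
        + (\<integral>x. total_score M h p x * indicator (set_pmf (jointX M P)) x \<partial>indep_law M P) - 1"
    using integrable_ln_Rratio integral_div_Rratio[of M P "total_score M h p", OF bounds]
    by simp_all
qed

end

text \<open>(A2) quantifies over all feature vectors, whereas the laws live on functions extensional
  on \<open>{..<M}\<close>.\<close>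

lemma sum_score_eq_Rratio_Xspace:
  assumes box: "\<And>x. x \<in> feature_box M P \<Longrightarrow> total_score M h p x = Rratio M P x"
    and x: "\<forall>m<M. x m \<in> Xspace P m"
  shows "(\<Sum>c\<in>UNIV. score M h p x c) = Rratio M P x"
proof -
  have "restrict x {..<M} \<in> feature_box M P" using x by (simp add: feature_box_def)
  then have "total_score M h p (restrict x {..<M}) = Rratio M P (restrict x {..<M})" by (rule box)
  then show ?thesis
    by (simp add: total_score_def score_restrict Rratio_restrict)
qed

locale cond_indep_sample = cond_indep_model +
  fixes N :: nat
  assumes M_le_N: "M \<le> N"
begin

lemma N_pos: "0 < N"
  using M_pos M_le_N by simp

lemma integral_TCg_majorant:
  assumes adm: "admissible M P h p"
  shows "integrable (measure_pmf (sample_law M N P)) (TCg_majorant M N P h p)"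
    and "(\<integral>s. TCg_majorant M N P h p s \<partial>sample_law M N P)
        = (\<integral>x. ln (Rratio M P x) \<partial>jointX M P) - off_support_score M P h p"
proof -
  note log_maj = integral_log_majorant[OF adm]
  note component = integral_sample_component[OF _ log_maj(1)]
  note U = integral_ustat[OF adm M_le_N]
  have int_sum: "integrable (measure_pmf (sample_law M N P)) (\<lambda>s. \<Sum>i<N. log_majorant M P h p (s i))"
    by (intro Bochner_Integration.integrable_sum component) simp
  have majorant: "TCg_majorant M N P h p
      = (\<lambda>s. 1 + 1 / real N * (\<Sum>i<N. log_majorant M P h p (s i)) - ustat M N h p s)"
    by (simp add: TCg_majorant_def fun_eq_iff)
  show "integrable (measure_pmf (sample_law M N P)) (TCg_majorant M N P h p)"
    unfolding majorant using int_sum U(1) by simp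
  have "(\<integral>s. (\<Sum>i<N. log_majorant M P h p (s i)) \<partial>sample_law M N P)
      = real N * (\<integral>x. log_majorant M P h p x \<partial>jointX M P)"
    by (simp add: Bochner_Integration.integral_sum component)
  then show "(\<integral>s. TCg_majorant M N P h p s \<partial>sample_law M N P)
      = (\<integral>x. ln (Rratio M P x) \<partial>jointX M P) - off_support_score M P h p"
    unfolding majorant using int_sum U N_pos log_maj(2) off_support_score_split(1)[OF adm]
    by simp
qed

lemma eTCg_le_integral_majorant:
  "admissible M P h p \<Longrightarrow> eTCg M N P h p \<le> ereal (\<integral>s. TCg_majorant M N P h p s \<partial>sample_law M N P)"
  unfolding eTCg_def by (rule eexpect_le_integral[OF integral_TCg_majorant(1) TCg_le_majorant])

lemma eTCg_le_TC_minus_off_support: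
  assumes "admissible M P h p"
  shows "eTCg M N P h p \<le> TC M P - ereal (off_support_score M P h p)"
  using eTCg_le_integral_majorant[OF assms] integral_TCg_majorant(2)[OF assms]
  by (simp add: TC_eq_integral)

lemma eTCg_le_TC:
  assumes "admissible M P h p"
  shows "eTCg M N P h p \<le> TC M P"
proof -
  have "TC M P - ereal (off_support_score M P h p) \<le> TC M P"
    using off_support_score_split(2)[OF assms] by (simp add: TC_eq_integral)
  with eTCg_le_TC_minus_off_support[OF assms] show ?thesis by (rule order_trans)
qed

lemma eTCg_hstar: "eTCg M N P (hstar P) (prior P) = TC M P"
proof -
  let ?h = "hstar P" and ?p = "prior P"
  have elog_eq: "elog (total_score M ?h ?p x) = ereal (log_majorant M P ?h ?p x)"
    if x: "x \<in> set_pmf (jointX M P)" for x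
    using total_score_hstar[of x] Rratio_pos[OF x] set_jointX_subset[of M P] x
    by (auto simp: elog_def log_majorant_def)
  have "TCg M N s ?h ?p = ereal (TCg_majorant M N P ?h ?p s)"
    if "s \<in> set_pmf (sample_law M N P)" for s
    using elog_eq set_sample_law[OF that]
    by (simp add: TCg_eq_ustat TCg_majorant_def one_ereal_def)
  then have "eTCg M N P ?h ?p = eexpect (sample_law M N P) (\<lambda>s. ereal (TCg_majorant M N P ?h ?p s))"
    unfolding eTCg_def by (rule eexpect_cong)
  also have "\<dots> = ereal ((\<integral>x. ln (Rratio M P x) \<partial>jointX M P) - off_support_score M P ?h ?p)"
    using eexpect_ereal[OF integral_TCg_majorant(1)[OF admissible_hstar]]
      integral_TCg_majorant(2)[OF admissible_hstar] by simp
  also have "off_support_score M P ?h ?p = 0"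
    unfolding off_support_score_def
    by (rule integral_eq_zero_AE, rule AE_pmfI)
       (auto simp: set_indep_law total_score_hstar Rratio_eq_0 split: split_indicator)
  finally show ?thesis by (simp add: TC_eq_integral)
qed

lemma total_score_eq_Rratio_if_optimal:
  assumes adm: "admissible M P h p" and opt: "TC M P \<le> eTCg M N P h p"
    and x: "x \<in> feature_box M P"
  shows "total_score M h p x = Rratio M P x"
proof -
  let ?I = "\<integral>s. TCg_majorant M N P h p s \<partial>sample_law M N P"
  have "TC M P \<le> TC M P - ereal (off_support_score M P h p)"
    using opt eTCg_le_TC_minus_off_support[OF adm] by (rule order_trans)
  then have D: "off_support_score M P h p = 0"
    using off_support_score_split(2)[OF adm] by (simp add: TC_eq_integral)
  then have "eTCg M N P h p = ereal ?I"
    using opt eTCg_le_integral_majorant[OF adm] integral_TCg_majorant(2)[OF adm]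
    by (simp add: TC_eq_integral)
  then have TCg_eq: "TCg M N s h p = ereal (TCg_majorant M N P h p s)"
    if "s \<in> set_pmf (sample_law M N P)" for s
    using eexpect_eq_integralD[OF integral_TCg_majorant(1)[OF adm] TCg_le_majorant _ that]
    by (simp add: eTCg_def)
  show ?thesis
  proof (cases "x \<in> set_pmf (jointX M P)")
    case True
    show ?thesis
      by (rule TCg_eq_majorant_const_sampleD[OF N_pos True TCg_eq[OF constant_sample_in_set[OF True]]])
  next
    case False
    then show ?thesis
      using off_support_score_split(3)[OF adm D x] Rratio_eq_0[OF x] by simp
  qed
qed

end

theorem mainTheorem3:
  fixes P :: "((nat \<Rightarrow> 'x) \<times> 'c::finite) pmf" and M N :: nat
  assumes M2: "2 \<le> M" and NM: "M \<le> N"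
    and prior_pos: "\<forall>c. 0 < prior P c"
    and A1: "\<forall>x \<in> {..<M} \<rightarrow>\<^sub>E (UNIV :: 'x set). \<forall>c.
        measure_pmf.prob P {w. (\<forall>m<M. fst w m = x m) \<and> snd w = c} / prior P c
        = (\<Prod>m<M. measure_pmf.prob P {w. fst w m = x m \<and> snd w = c} / prior P c)"
    and A2: "\<forall>a b :: nat \<Rightarrow> 'x \<Rightarrow> 'c \<Rightarrow> real. \<forall>ra rb :: 'c \<Rightarrow> real.
        admissible M P a ra \<and> admissible M P b rb
        \<and> (\<forall>x. (\<forall>m<M. x m \<in> Xspace P m) \<longrightarrow> (\<Sum>c\<in>UNIV. score M a ra x c) = Rratio M P x)
        \<and> (\<forall>x. (\<forall>m<M. x m \<in> Xspace P m) \<longrightarrow> (\<Sum>c\<in>UNIV. score M b rb x c) = Rratio M P x)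
        \<longrightarrow> (\<exists>\<pi>. bij \<pi> \<and> (\<forall>m<M. \<forall>x\<in>Xspace P m. \<forall>c. a m x c = b m x (\<pi> c))
                      \<and> (\<forall>c. ra c = rb (\<pi> c)))"
  shows
    "((\<exists>h p. admissible M P h p \<and> eTCg M N P h p = TC M P)
       \<and> (\<forall>h p. admissible M P h p \<longrightarrow> eTCg M N P h p \<le> TC M P))
     \<and> (admissible M P (hstar P) (prior P)
       \<and> (\<forall>h p. admissible M P h p \<longrightarrow> eTCg M N P h p \<le> eTCg M N P (hstar P) (prior P))
       \<and> (\<forall>x\<in>set_pmf (jointX M P). \<forall>c. zeta M (hstar P) (prior P) x c = zetastar M P x c))
     \<and> (\<forall>h p. admissible M P h p
          \<and> (\<forall>h' p'. admissible M P h' p' \<longrightarrow> eTCg M N P h' p' \<le> eTCg M N P h p)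
          \<longrightarrow> (\<exists>\<pi>. bij \<pi> \<and> (\<forall>m<M. \<forall>x\<in>Xspace P m. \<forall>c. h m x c = hstar P m x (\<pi> c))
                       \<and> (\<forall>c. p c = prior P (\<pi> c))))"
proof -
  interpret cond_indep_sample P M N
    using M2 NM prior_pos A1 by unfold_locales auto
  have hstar_optimal: "eTCg M N P h p \<le> eTCg M N P (hstar P) (prior P)"
    if "admissible M P h p" for h p
    using eTCg_le_TC[OF that] eTCg_hstar by simp
  have optimal_unique: "\<exists>\<pi>. bij \<pi> \<and> (\<forall>m<M. \<forall>x\<in>Xspace P m. \<forall>c. h m x c = hstar P m x (\<pi> c))
                       \<and> (\<forall>c. p c = prior P (\<pi> c))"
    if adm: "admissible M P h p"
      and opt: "\<forall>h' p'. admissible M P h' p' \<longrightarrow> eTCg M N P h' p' \<le> eTCg M N P h p" for h p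
  proof -
    have "TC M P \<le> eTCg M N P h p"
      using opt admissible_hstar eTCg_hstar by metis
    then have "(\<Sum>c\<in>UNIV. score M h p x c) = Rratio M P x" if "\<forall>m<M. x m \<in> Xspace P m" for x
      using sum_score_eq_Rratio_Xspace[OF total_score_eq_Rratio_if_optimal[OF adm] that] by blast
    moreover have "(\<Sum>c\<in>UNIV. score M (hstar P) (prior P) x c) = Rratio M P x"
      if "\<forall>m<M. x m \<in> Xspace P m" for x
      using sum_score_eq_Rratio_Xspace[OF total_score_hstar that] .
    ultimately show ?thesis
      using A2 adm admissible_hstar by blast
  qed
  show ?thesis
    using admissible_hstar eTCg_hstar eTCg_le_TC hstar_optimal zeta_hstar optimal_unique by auto
qed

end
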